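(* Let $A=\langle Q,\delta,\gamma,F\rangle$ be a pomset automaton. If $q\xrightarrow{U}_A q'$, then there exist $\ell\in\mathbb N$, states $q_0,\dots,q_\ell\in Q$ with $q_0=q$ and $q_\ell=q'$, and pomsets $U_0,\dots,U_{\ell-1}$ with $U=U_0\cdots U_{\ell-1}$, such that for each $0\le i<\ell$ the trace $q_i\xrightarrow{U_i}_A q_{i+1}$ is a unit trace.
   Context: Fix a finite alphabet $\Sigma$; pomsets are isomorphism classes of $\Sigma$-labelled posets, $1$ the empty pomset, $a\in\Sigma$ the one-point pomset, $\cdot,\parallel$ sequential/parallel composition, $\mathsf{Pom}^{\mathsf{sp}}$ the smallest set containing $1$ and all $a$ closed under both; the empty product $U_0\cdots U_{-1}$ is $1$. A PA is $A=\langle Q,\delta,\gamma,F\rangle$ with $F\subseteq Q$, $\delta:Q\times\Sigma\to Q$, $\gamma:Q^3\to Q$, with states $\bot\notin F$, $\top\in F$ such that $\delta(\bot,a)=\delta(\top,a)=\bot$, $\gamma(\bot,r,s)=\gamma(\top,r,s)=\bot$. Traces: the smallest relation with $q\xrightarrow{1}_A q$; $q\xrightarrow{a}_A\delta(q,a)$; $q\xrightarrow{U}_A q''\xrightarrow{V}_A q'$ implies $q\xrightarrow{U\cdot V}_A q'$; $r\xrightarrow{U}_A r'\in F$, $s\xrightarrow{V}_A s'\in F$ imply $q\xrightarrow{U\parallel V}_A\gamma(q,r,s)$. A unit trace is either a $\delta$-trace $q\xrightarrow{a}_A\delta(q,a)$ for some $a\in\Sigma$, or a $\gamma$-trace $q\xrightarrow{V\parallel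 W}_A\gamma(q,r,s)$ where $r\xrightarrow{V}_A r'$ and $s\xrightarrow{W}_A s'$ for some $r',s'\in F$. *)

theory Defs
  imports Main
begin

text \<open>A labelled poset is represented concretely by a carrier (a set of natural numbers),
  a (reflexive) partial order on it, and a labelling function (only relevant on the carrier).\<close>

type_synonym 'a lpo = "nat set \<times> (nat \<times> nat) set \<times> (nat \<Rightarrow> 'a)"

definition car :: "'a lpo \<Rightarrow> nat set" where "car X = fst X"
definition ord :: "'a lpo \<Rightarrow> (nat \<times> nat) set" where "ord X = fst (snd X)"
definition lab :: "'a lpo \<Rightarrow> nat \<Rightarrow> 'a" where "lab X = snd (snd X)"

definition wf_lpo :: "'a lpo \<Rightarrow> bool" where
  "wf_lpo X \<longleftrightarrow> finite (car X) \<and> ord X \<subseteq> car X \<times> car X \<and> partial_order_on (car X) (ord X)"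

definition lpo_iso :: "'a lpo \<Rightarrow> 'a lpo \<Rightarrow> bool" where
  "lpo_iso X Y \<longleftrightarrow> (\<exists>f. bij_betw f (car X) (car Y)
      \<and> (\<forall>x\<in>car X. lab Y (f x) = lab X x)
      \<and> (\<forall>x\<in>car X. \<forall>y\<in>car X. (x, y) \<in> ord X \<longleftrightarrow> (f x, f y) \<in> ord Y))"

definition pom_rel :: "'a lpo \<Rightarrow> 'a lpo \<Rightarrow> bool" where
  "pom_rel X Y \<longleftrightarrow> wf_lpo X \<and> wf_lpo Y \<and> lpo_iso X Y"

lemma lpo_iso_refl: "lpo_iso X X"
  unfolding lpo_iso_def by (rule exI[of _ id]) auto

lemma lpo_iso_sym: assumes "lpo_iso X Y" shows "lpo_iso Y X"
proof -
  from assms obtain f where f: "bij_betw f (car X) (car Y)"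
    "\<forall>x\<in>car X. lab Y (f x) = lab X x"
    "\<forall>x\<in>car X. \<forall>y\<in>car X. (x, y) \<in> ord X \<longleftrightarrow> (f x, f y) \<in> ord Y"
    unfolding lpo_iso_def by blast
  let ?g = "inv_into (car X) f"
  have g: "bij_betw ?g (car Y) (car X)" using f(1) by (rule bij_betw_inv_into)
  have gi: "\<And>y. y \<in> car Y \<Longrightarrow> f (?g y) = y" using f(1)
    by (meson bij_betw_inv_into_right)
  have gm: "\<And>y. y \<in> car Y \<Longrightarrow> ?g y \<in> car X" using g bij_betwE by blast
  show ?thesis unfolding lpo_iso_def
    apply (rule exI[of _ ?g])
    using g gi gm f(2,3) by metis
qed

lemma lpo_iso_trans: assumes "lpo_iso X Y" "lpo_iso Y Z" shows "lpo_iso X Z"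
proof -
  from assms(1) obtain f where f: "bij_betw f (car X) (car Y)"
    "\<forall>x\<in>car X. lab Y (f x) = lab X x"
    "\<forall>x\<in>car X. \<forall>y\<in>car X. (x, y) \<in> ord X \<longleftrightarrow> (f x, f y) \<in> ord Y"
    unfolding lpo_iso_def by blast
  from assms(2) obtain g where g: "bij_betw g (car Y) (car Z)"
    "\<forall>x\<in>car Y. lab Z (g x) = lab Y x"
    "\<forall>x\<in>car Y. \<forall>y\<in>car Y. (x, y) \<in> ord Y \<longleftrightarrow> (g x, g y) \<in> ord Z"
    unfolding lpo_iso_def by blast
  have m: "\<And>x. x \<in> car X \<Longrightarrow> f x \<in> car Y" using f(1) bij_betwE by blast
  show ?thesis unfolding lpo_iso_def
    apply (rule exI[of _ "g \<circ> f"])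
    using bij_betw_trans[OF f(1) g(1)] f(2,3) g(2,3) m by auto
qed

lemma part_equivp_pom_rel: "part_equivp pom_rel"
proof (rule part_equivpI)
  have "wf_lpo ({}, {}, \<lambda>_. undefined)"
    unfolding wf_lpo_def car_def ord_def partial_order_on_def preorder_on_def
      refl_on_def trans_def antisym_def by simp
  then show "\<exists>x. pom_rel x x" unfolding pom_rel_def using lpo_iso_refl by blast
  show "symp pom_rel" unfolding symp_def pom_rel_def using lpo_iso_sym by blast
  show "transp pom_rel" unfolding transp_def pom_rel_def using lpo_iso_trans by blast
qed

quotient_type 'a pomset = "'a lpo" / partial: pom_rel
  by (rule part_equivp_pom_rel)

text \<open>Raw constructions on representatives (disjoint union via even/odd encoding).\<close>

definition one_raw :: "'a lpo" where
  "one_raw = ({}, {}, \<lambda>_. undefined)"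

definition atom_raw :: "'a \<Rightarrow> 'a lpo" where
  "atom_raw a = ({0}, {(0, 0)}, \<lambda>_. a)"

definition emb_l :: "nat \<Rightarrow> nat" where "emb_l n = 2 * n"
definition emb_r :: "nat \<Rightarrow> nat" where "emb_r n = 2 * n + 1"

definition par_raw :: "'a lpo \<Rightarrow> 'a lpo \<Rightarrow> 'a lpo" where
  "par_raw X Y =
    (emb_l ` car X \<union> emb_r ` car Y,
     map_prod emb_l emb_l ` ord X \<union> map_prod emb_r emb_r ` ord Y,
     \<lambda>m. if even m then lab X (m div 2) else lab Y (m div 2))"

definition seq_raw :: "'a lpo \<Rightarrow> 'a lpo \<Rightarrow> 'a lpo" where
  "seq_raw X Y =
    (emb_l ` car X \<union> emb_r ` car Y,
     map_prod emb_l emb_l ` ord X \<union> map_prod emb_r emb_r ` ord Y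
       \<union> (emb_l ` car X) \<times> (emb_r ` car Y),
     \<lambda>m. if even m then lab X (m div 2) else lab Y (m div 2))"

definition pom_one :: "'a pomset" ("\<one>\<^sub>p") where
  "pom_one = abs_pomset one_raw"

definition pom_atom :: "'a \<Rightarrow> 'a pomset" where
  "pom_atom a = abs_pomset (atom_raw a)"

definition pom_seq :: "'a pomset \<Rightarrow> 'a pomset \<Rightarrow> 'a pomset" (infixl "\<cdot>\<^sub>p" 70) where
  "pom_seq U V = abs_pomset (seq_raw (rep_pomset U) (rep_pomset V))"

definition pom_par :: "'a pomset \<Rightarrow> 'a pomset \<Rightarrow> 'a pomset" (infixl "\<parallel>\<^sub>p" 65) where
  "pom_par U V = abs_pomset (par_raw (rep_pomset U) (rep_pomset V))"

fun pom_seqs :: "'a pomset list \<Rightarrow> 'a pomset" where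
  "pom_seqs [] = pom_one"
| "pom_seqs (U # Us) = pom_seq U (pom_seqs Us)"

definition is_PA :: "('q \<Rightarrow> 'a::finite \<Rightarrow> 'q) \<Rightarrow> ('q \<Rightarrow> 'q \<Rightarrow> 'q \<Rightarrow> 'q) \<Rightarrow> 'q set
    \<Rightarrow> 'q \<Rightarrow> 'q \<Rightarrow> bool" where
  "is_PA \<delta> \<gamma> F qbot qtop \<longleftrightarrow> qbot \<notin> F \<and> qtop \<in> F
     \<and> (\<forall>a. \<delta> qbot a = qbot \<and> \<delta> qtop a = qbot)
     \<and> (\<forall>r s. \<gamma> qbot r s = qbot \<and> \<gamma> qtop r s = qbot)"

inductive trace :: "('q \<Rightarrow> 'a::finite \<Rightarrow> 'q) \<Rightarrow> ('q \<Rightarrow> 'q \<Rightarrow> 'q \<Rightarrow> 'q) \<Rightarrow> 'q set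
    \<Rightarrow> 'q \<Rightarrow> 'a pomset \<Rightarrow> 'q \<Rightarrow> bool"
  for \<delta> \<gamma> F where
  tr_one: "trace \<delta> \<gamma> F q pom_one q"
| tr_atom: "trace \<delta> \<gamma> F q (pom_atom a) (\<delta> q a)"
| tr_seq: "trace \<delta> \<gamma> F q U q'' \<Longrightarrow> trace \<delta> \<gamma> F q'' V q' \<Longrightarrow> trace \<delta> \<gamma> F q (pom_seq U V) q'"
| tr_par: "trace \<delta> \<gamma> F r U r' \<Longrightarrow> r' \<in> F \<Longrightarrow> trace \<delta> \<gamma> F s V s' \<Longrightarrow> s' \<in> F
           \<Longrightarrow> trace \<delta> \<gamma> F q (pom_par U V) (\<gamma> q r s)"

definition unit_trace :: "('q \<Rightarrow> 'a::finite \<Rightarrow> 'q) \<Rightarrow> ('q \<Rightarrow> 'q \<Rightarrow> 'q \<Rightarrow> 'q) \<Rightarrow> 'q set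
    \<Rightarrow> 'q \<Rightarrow> 'a pomset \<Rightarrow> 'q \<Rightarrow> bool" where
  "unit_trace \<delta> \<gamma> F q U q' \<longleftrightarrow>
     (\<exists>a. U = pom_atom a \<and> q' = \<delta> q a)
   \<or> (\<exists>V W r s r' s'. U = pom_par V W \<and> q' = \<gamma> q r s
        \<and> trace \<delta> \<gamma> F r V r' \<and> r' \<in> F \<and> trace \<delta> \<gamma> F s W s' \<and> s' \<in> F)"

end

theory Submission
  imports Defs
begin

text \<open>By induction on the derivation of the trace: a one-point trace and a parallel trace are
  unit traces themselves, the empty trace is the empty product, and a sequential composition
  of two traces concatenates their decompositions. The last step needs that sequential
  composition makes pomsets a monoid with unit 1; this is checked on representatives, where
  the two sides of each monoid law are related by an explicit relabelling of the even/odd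
  encoded disjoint unions.\<close>

lemma even_odd_nat_eqI: "even a = even (b::nat) \<Longrightarrow> a div 2 = b div 2 \<Longrightarrow> a = b"
  by (metis div_mult_mod_eq mod2_eq_if)

lemma emb_l_image_iff: "m \<in> emb_l ` A \<longleftrightarrow> even m \<and> m div 2 \<in> A"
  unfolding emb_l_def by (auto intro: image_eqI[of _ _ "m div 2"])

lemma emb_r_image_iff: "m \<in> emb_r ` A \<longleftrightarrow> odd m \<and> m div 2 \<in> A"
  unfolding emb_r_def by (auto intro: image_eqI[of _ _ "m div 2"])

lemma map_prod_emb_l_image_iff:
  "(a, b) \<in> map_prod emb_l emb_l ` R \<longleftrightarrow> even a \<and> even b \<and> (a div 2, b div 2) \<in> R"
  unfolding emb_l_def by (auto intro: image_eqI[of _ _ "(a div 2, b div 2)"])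

lemma map_prod_emb_r_image_iff:
  "(a, b) \<in> map_prod emb_r emb_r ` R \<longleftrightarrow> odd a \<and> odd b \<and> (a div 2, b div 2) \<in> R"
  unfolding emb_r_def by (auto intro: image_eqI[of _ _ "(a div 2, b div 2)"])

lemma car_seq_raw:
  "m \<in> car (seq_raw X Y) \<longleftrightarrow> even m \<and> m div 2 \<in> car X \<or> odd m \<and> m div 2 \<in> car Y"
  unfolding seq_raw_def car_def by (simp add: emb_l_image_iff emb_r_image_iff)

lemma lab_seq_raw: "lab (seq_raw X Y) m = (if even m then lab X (m div 2) else lab Y (m div 2))"
  unfolding seq_raw_def lab_def by simp

lemma ord_seq_raw: "(a, b) \<in> ord (seq_raw X Y) \<longleftrightarrow>
    even a \<and> even b \<and> (a div 2, b div 2) \<in> ord X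
  \<or> odd a \<and> odd b \<and> (a div 2, b div 2) \<in> ord Y
  \<or> even a \<and> odd b \<and> a div 2 \<in> car X \<and> b div 2 \<in> car Y"
  unfolding seq_raw_def ord_def car_def
  by (auto simp: emb_l_image_iff emb_r_image_iff map_prod_emb_l_image_iff map_prod_emb_r_image_iff)

lemma wf_lpo_seq_raw:
  assumes "wf_lpo X" "wf_lpo Y"
  shows "wf_lpo (seq_raw X Y)"
proof -
  have X: "ord X \<subseteq> car X \<times> car X" "refl_on (car X) (ord X)" "trans (ord X)" "antisym (ord X)"
    and Y: "ord Y \<subseteq> car Y \<times> car Y" "refl_on (car Y) (ord Y)" "trans (ord Y)" "antisym (ord Y)"
    using assms unfolding wf_lpo_def partial_order_on_def preorder_on_def by auto
  have "finite (car (seq_raw X Y))"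
    using assms unfolding seq_raw_def car_def wf_lpo_def by simp
  moreover have "ord (seq_raw X Y) \<subseteq> car (seq_raw X Y) \<times> car (seq_raw X Y)"
    using X(1) Y(1) by (auto simp: ord_seq_raw car_seq_raw)
  moreover have "refl_on (car (seq_raw X Y)) (ord (seq_raw X Y))"
    using X(2) Y(2) by (auto simp: refl_on_def ord_seq_raw car_seq_raw)
  moreover have "trans (ord (seq_raw X Y))"
    using X(1,3) Y(1,3) unfolding trans_def ord_seq_raw by blast
  moreover have "antisym (ord (seq_raw X Y))"
    using X(4) Y(4) unfolding antisym_def ord_seq_raw by (blast intro: even_odd_nat_eqI)
  ultimately show ?thesis
    unfolding wf_lpo_def partial_order_on_def preorder_on_def by blast
qed

lemma lpo_isoI:
  assumes "\<And>x. x \<in> car X \<Longrightarrow> f x \<in> car Y" "\<And>y. y \<in> car Y \<Longrightarrow> g y \<in> car X"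
    "\<And>x. x \<in> car X \<Longrightarrow> g (f x) = x" "\<And>y. y \<in> car Y \<Longrightarrow> f (g y) = y"
    "\<And>x. x \<in> car X \<Longrightarrow> lab Y (f x) = lab X x"
    "\<And>x y. x \<in> car X \<Longrightarrow> y \<in> car X \<Longrightarrow> (x, y) \<in> ord X \<longleftrightarrow> (f x, f y) \<in> ord Y"
  shows "lpo_iso X Y"
  unfolding lpo_iso_def
  by (rule exI[of _ f]) (use assms bij_betw_byWitness[of "car X" g f "car Y"] in auto)

lemma lpo_isoE:
  assumes "lpo_iso X Y"
  obtains f g where "\<And>x. x \<in> car X \<Longrightarrow> f x \<in> car Y" "\<And>y. y \<in> car Y \<Longrightarrow> g y \<in> car X"
    "\<And>x. x \<in> car X \<Longrightarrow> g (f x) = x" "\<And>y. y \<in> car Y \<Longrightarrow> f (g y) = y"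
    "\<And>x. x \<in> car X \<Longrightarrow> lab Y (f x) = lab X x"
    "\<And>x y. x \<in> car X \<Longrightarrow> y \<in> car X \<Longrightarrow> (x, y) \<in> ord X \<longleftrightarrow> (f x, f y) \<in> ord Y"
proof -
  from assms obtain f where f: "bij_betw f (car X) (car Y)"
    "\<forall>x\<in>car X. lab Y (f x) = lab X x"
    "\<forall>x\<in>car X. \<forall>y\<in>car X. (x, y) \<in> ord X \<longleftrightarrow> (f x, f y) \<in> ord Y"
    unfolding lpo_iso_def by blast
  show thesis
  proof (rule that[of f "inv_into (car X) f"])
    show "\<And>x. x \<in> car X \<Longrightarrow> f x \<in> car Y"
      using f(1) bij_betwE by blast
    show "\<And>y. y \<in> car Y \<Longrightarrow> inv_into (car X) f y \<in> car X"
      using f(1) bij_betw_inv_into bij_betwE by blast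
    show "\<And>x. x \<in> car X \<Longrightarrow> inv_into (car X) f (f x) = x"
      using f(1) bij_betw_inv_into_left by metis
    show "\<And>y. y \<in> car Y \<Longrightarrow> f (inv_into (car X) f y) = y"
      using f(1) bij_betw_inv_into_right by metis
  qed (use f in auto)
qed

lemma lpo_iso_seq_raw:
  assumes "lpo_iso X X'" "lpo_iso Y Y'"
  shows "lpo_iso (seq_raw X Y) (seq_raw X' Y')"
proof -
  obtain f f' where f: "\<And>x. x \<in> car X \<Longrightarrow> f x \<in> car X'" "\<And>y. y \<in> car X' \<Longrightarrow> f' y \<in> car X"
    "\<And>x. x \<in> car X \<Longrightarrow> f' (f x) = x" "\<And>y. y \<in> car X' \<Longrightarrow> f (f' y) = y"
    "\<And>x. x \<in> car X \<Longrightarrow> lab X' (f x) = lab X x"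
    "\<And>x y. x \<in> car X \<Longrightarrow> y \<in> car X \<Longrightarrow> (x, y) \<in> ord X \<longleftrightarrow> (f x, f y) \<in> ord X'"
    using assms(1) by (rule lpo_isoE) blast
  obtain g g' where g: "\<And>x. x \<in> car Y \<Longrightarrow> g x \<in> car Y'" "\<And>y. y \<in> car Y' \<Longrightarrow> g' y \<in> car Y"
    "\<And>x. x \<in> car Y \<Longrightarrow> g' (g x) = x" "\<And>y. y \<in> car Y' \<Longrightarrow> g (g' y) = y"
    "\<And>x. x \<in> car Y \<Longrightarrow> lab Y' (g x) = lab Y x"
    "\<And>x y. x \<in> car Y \<Longrightarrow> y \<in> car Y \<Longrightarrow> (x, y) \<in> ord Y \<longleftrightarrow> (g x, g y) \<in> ord Y'"
    using assms(2) by (rule lpo_isoE) blast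
  show ?thesis
    by (rule lpo_isoI[where f="\<lambda>m. if even m then 2 * f (m div 2) else 2 * g (m div 2) + 1"
          and g="\<lambda>m. if even m then 2 * f' (m div 2) else 2 * g' (m div 2) + 1"])
      (use f g in \<open>auto simp: car_seq_raw lab_seq_raw ord_seq_raw\<close>)
qed

lemma wf_lpo_one_raw: "wf_lpo one_raw"
  unfolding wf_lpo_def one_raw_def car_def ord_def partial_order_on_def preorder_on_def
    refl_on_def trans_def antisym_def by simp

lemma car_one_raw [simp]: "car one_raw = {}"
  by (simp add: one_raw_def car_def)

lemma ord_one_raw [simp]: "ord one_raw = {}"
  by (simp add: one_raw_def ord_def)

lemma lpo_iso_seq_raw_one_right: "lpo_iso (seq_raw X one_raw) X"
  by (rule lpo_isoI[where f="\<lambda>m. m div 2" and g="\<lambda>n. 2 * n"])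
    (auto simp: car_seq_raw lab_seq_raw ord_seq_raw)

lemma lpo_iso_seq_raw_one_left: "lpo_iso (seq_raw one_raw X) X"
  by (rule lpo_isoI[where f="\<lambda>m. m div 2" and g="\<lambda>n. 2 * n + 1"])
    (auto simp: car_seq_raw lab_seq_raw ord_seq_raw)

text \<open>In \<open>(X;Y);Z\<close> the elements of \<open>X\<close>, \<open>Y\<close>, \<open>Z\<close> sit at positions \<open>4k\<close>, \<open>4k+2\<close>,
  \<open>2k+1\<close>; in \<open>X;(Y;Z)\<close> at \<open>2k\<close>, \<open>4k+1\<close>, \<open>4k+3\<close>.\<close>

lemma lpo_iso_seq_raw_assoc: "lpo_iso (seq_raw (seq_raw X Y) Z) (seq_raw X (seq_raw Y Z))"
  by (rule lpo_isoI[where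
      f="\<lambda>m. if even m then (if even (m div 2) then 2 * (m div 2 div 2) else 2 * (2 * (m div 2 div 2)) + 1)
            else 2 * (2 * (m div 2) + 1) + 1"
      and g="\<lambda>n. if even n then 2 * (2 * (n div 2))
            else (if even (n div 2) then 2 * (2 * (n div 2 div 2) + 1) else 2 * (n div 2 div 2) + 1)"])
    ((auto simp: car_seq_raw lab_seq_raw ord_seq_raw simp del: odd_two_times_div_two_nat), presburger+)

lemma wf_lpo_rep_pomset: "wf_lpo (rep_pomset U)"
  using Quotient3_rep_reflp[OF Quotient3_pomset, of U] unfolding pom_rel_def by simp

lemma abs_pomset_eqI: "wf_lpo X \<Longrightarrow> wf_lpo Y \<Longrightarrow> lpo_iso X Y \<Longrightarrow> abs_pomset X = abs_pomset Y"
  using Quotient3_rel_abs[OF Quotient3_pomset] unfolding pom_rel_def by blast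

lemma pom_seq_abs_pomset:
  assumes "wf_lpo X" "wf_lpo Y"
  shows "pom_seq (abs_pomset X) (abs_pomset Y) = abs_pomset (seq_raw X Y)"
proof -
  have "lpo_iso (rep_pomset (abs_pomset Z)) Z" if "wf_lpo Z" for Z :: "'a lpo"
    using Quotient3_rep_abs[OF Quotient3_pomset, of Z] that lpo_iso_refl[of Z]
    unfolding pom_rel_def by blast
  then show ?thesis
    unfolding pom_seq_def
    using assms by (intro abs_pomset_eqI wf_lpo_seq_raw wf_lpo_rep_pomset lpo_iso_seq_raw)
qed

lemma pomset_cases_abs: obtains X where "wf_lpo X" "U = abs_pomset X"
  by (rule that[of "rep_pomset U"])
    (simp_all add: wf_lpo_rep_pomset Quotient3_abs_rep[OF Quotient3_pomset])

lemma pom_seq_one_right [simp]: "pom_seq U pom_one = U"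
proof -
  obtain X where X: "wf_lpo X" "U = abs_pomset X" by (rule pomset_cases_abs)
  then have "pom_seq U pom_one = abs_pomset (seq_raw X one_raw)"
    unfolding pom_one_def by (simp add: pom_seq_abs_pomset wf_lpo_one_raw)
  also have "\<dots> = U"
    unfolding X(2) using X(1)
    by (intro abs_pomset_eqI wf_lpo_seq_raw wf_lpo_one_raw lpo_iso_seq_raw_one_right)
  finally show ?thesis .
qed

lemma pom_seq_one_left [simp]: "pom_seq pom_one U = U"
proof -
  obtain X where X: "wf_lpo X" "U = abs_pomset X" by (rule pomset_cases_abs)
  then have "pom_seq pom_one U = abs_pomset (seq_raw one_raw X)"
    unfolding pom_one_def by (simp add: pom_seq_abs_pomset wf_lpo_one_raw)
  also have "\<dots> = U"
    unfolding X(2) using X(1)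
    by (intro abs_pomset_eqI wf_lpo_seq_raw wf_lpo_one_raw lpo_iso_seq_raw_one_left)
  finally show ?thesis .
qed

lemma pom_seq_assoc: "pom_seq (pom_seq U V) W = pom_seq U (pom_seq V W)"
proof -
  obtain X where X: "wf_lpo X" "U = abs_pomset X" by (rule pomset_cases_abs)
  obtain Y where Y: "wf_lpo Y" "V = abs_pomset Y" by (rule pomset_cases_abs)
  obtain Z where Z: "wf_lpo Z" "W = abs_pomset Z" by (rule pomset_cases_abs)
  note wf = X(1) Y(1) Z(1)
  have "pom_seq (pom_seq U V) W = abs_pomset (seq_raw (seq_raw X Y) Z)"
    using wf unfolding X(2) Y(2) Z(2) by (simp add: pom_seq_abs_pomset wf_lpo_seq_raw)
  also have "\<dots> = abs_pomset (seq_raw X (seq_raw Y Z))"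
    using wf by (intro abs_pomset_eqI wf_lpo_seq_raw lpo_iso_seq_raw_assoc)
  also have "\<dots> = pom_seq U (pom_seq V W)"
    using wf unfolding X(2) Y(2) Z(2) by (simp add: pom_seq_abs_pomset wf_lpo_seq_raw)
  finally show ?thesis .
qed

lemma pom_seqs_append: "pom_seqs (Us @ Vs) = pom_seq (pom_seqs Us) (pom_seqs Vs)"
  by (induction Us) (simp_all add: pom_seq_assoc)

inductive unit_run :: "('q \<Rightarrow> 'a::finite \<Rightarrow> 'q) \<Rightarrow> ('q \<Rightarrow> 'q \<Rightarrow> 'q \<Rightarrow> 'q) \<Rightarrow> 'q set
    \<Rightarrow> 'q \<Rightarrow> 'a pomset list \<Rightarrow> 'q \<Rightarrow> bool"
  for \<delta> \<gamma> F where
  unit_run_Nil: "unit_run \<delta> \<gamma> F q [] q"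
| unit_run_Cons: "unit_trace \<delta> \<gamma> F q U q'' \<Longrightarrow> unit_run \<delta> \<gamma> F q'' Us q'
    \<Longrightarrow> unit_run \<delta> \<gamma> F q (U # Us) q'"

lemma unit_run_append:
  "unit_run \<delta> \<gamma> F q Us q'' \<Longrightarrow> unit_run \<delta> \<gamma> F q'' Vs q' \<Longrightarrow> unit_run \<delta> \<gamma> F q (Us @ Vs) q'"
  by (induction rule: unit_run.induct) (auto intro: unit_run.intros)

lemma unit_run_single: "unit_trace \<delta> \<gamma> F q U q' \<Longrightarrow> unit_run \<delta> \<gamma> F q [U] q'"
  by (auto intro: unit_run.intros)

lemma trace_imp_unit_run:
  "trace \<delta> \<gamma> F q U q' \<Longrightarrow> \<exists>Us. U = pom_seqs Us \<and> unit_run \<delta> \<gamma> F q Us q'"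
proof (induction rule: trace.induct)
  case (tr_one q)
  show ?case by (intro exI[of _ "[]"]) (simp add: unit_run_Nil)
next
  case (tr_atom q a)
  then have "unit_trace \<delta> \<gamma> F q (pom_atom a) (\<delta> q a)"
    unfolding unit_trace_def by blast
  then show ?case by (intro exI[of _ "[pom_atom a]"]) (simp add: unit_run_single)
next
  case (tr_seq q U q'' V q')
  then obtain Us Vs where "U = pom_seqs Us" "unit_run \<delta> \<gamma> F q Us q''"
    and "V = pom_seqs Vs" "unit_run \<delta> \<gamma> F q'' Vs q'"
    by blast
  then show ?case by (intro exI[of _ "Us @ Vs"]) (simp add: pom_seqs_append unit_run_append)
next
  case (tr_par r U r' s V s' q)
  then have "unit_trace \<delta> \<gamma> F q (pom_par U V) (\<gamma> q r s)"
    unfolding unit_trace_def by blast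
  then show ?case by (intro exI[of _ "[pom_par U V]"]) (simp add: unit_run_single)
qed

lemma unit_run_nth:
  "unit_run \<delta> \<gamma> F q Us q' \<Longrightarrow> \<exists>qs. length qs = Suc (length Us) \<and> qs ! 0 = q
     \<and> qs ! length Us = q' \<and> (\<forall>i<length Us. unit_trace \<delta> \<gamma> F (qs ! i) (Us ! i) (qs ! Suc i))"
proof (induction rule: unit_run.induct)
  case (unit_run_Nil q)
  show ?case by (intro exI[of _ "[q]"]) simp
next
  case (unit_run_Cons q U q'' Us q')
  then obtain qs where qs: "length qs = Suc (length Us)" "qs ! 0 = q''" "qs ! length Us = q'"
    "\<forall>i<length Us. unit_trace \<delta> \<gamma> F (qs ! i) (Us ! i) (qs ! Suc i)"
    by blast
  have "unit_trace \<delta> \<gamma> F ((q # qs) ! i) ((U # Us) ! i) ((q # qs) ! Suc i)"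
    if "i < length (U # Us)" for i
    using qs unit_run_Cons.hyps(1) that by (cases i) auto
  then show ?case using qs by (intro exI[of _ "q # qs"]) auto
qed

theorem mainTheorem8:
  fixes \<delta> :: "'q \<Rightarrow> 'a::finite \<Rightarrow> 'q" and \<gamma> :: "'q \<Rightarrow> 'q \<Rightarrow> 'q \<Rightarrow> 'q" and F :: "'q set"
    and qbot qtop q q' :: 'q and U :: "'a pomset"
  assumes "is_PA \<delta> \<gamma> F qbot qtop"
    and "trace \<delta> \<gamma> F q U q'"
  shows "\<exists>(l::nat) (qs::'q list) (Us::'a pomset list).
           length qs = Suc l \<and> length Us = l \<and> qs ! 0 = q \<and> qs ! l = q'
         \<and> U = pom_seqs Us
         \<and> (\<forall>i<l. unit_trace \<delta> \<gamma> F (qs ! i) (Us ! i) (qs ! Suc i))"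
proof -
  obtain Us where U: "U = pom_seqs Us" and run: "unit_run \<delta> \<gamma> F q Us q'"
    using trace_imp_unit_run[OF assms(2)] by blast
  obtain qs where "length qs = Suc (length Us)" "qs ! 0 = q" "qs ! length Us = q'"
    "\<forall>i<length Us. unit_trace \<delta> \<gamma> F (qs ! i) (Us ! i) (qs ! Suc i)"
    using unit_run_nth[OF run] by blast
  then show ?thesis using U by blast
qed

end
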